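(* Let $W$ be a set of $n$ workers and $F$ a set of $n$ firms ($n\ge 2$), where each worker $w$ has a strict complete preference order $\succ_w$ over $F$ and each firm $f$ has a strict complete preference order $\succ_f$ over $W$; call this instance $P$. Let $P^*$ be the normal form of $P$ (defined in the context), with normal-form lists $L^*_w\subseteq F$ for each worker and $L^*_f\subseteq W$ for each firm. Then the following three statements are equivalent: (a) $P$ has a unique stable matching. (b) $P^*$ is acyclic, i.e. there do not exist an integer $k$ with $2\le k\le n$, distinct workers $w_1,\dots,w_k$ and distinct firms $f_1,\dots,f_k$ such that, for all $j=1,\dots,k$ (indices modulo $k$), $f_j,f_{j+1}\in L^*_{w_j}$ with $f_{j+1}\succ_{w_j} f_j$, and $w_j,w_{j-1}\in L^*_{f_j}$ with $w_j\succ_{f_j} w_{j-1}$. (c) In $P^*$ every worker's list $L^*_w$ and every firm's list $L^*_f$ consists of exactly one element.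
   Context: A matching is a bijection $\mu$ pairing each worker with exactly one firm and each firm with exactly one worker. A worker $w$ and firm $f$ form a blocking pair for $\mu$ if $f\succ_w \mu(w)$ and $w\succ_f\mu(f)$; $\mu$ is stable if it has no blocking pair. Iterated deletion of unattractive alternatives (IDUA) and the normal form: start with lists $L^0_w=F$ for every worker $w$ and $L^0_f=W$ for every firm $f$ (so $f\in L^0_w$ iff $w\in L^0_f$), each list ordered by the participant's original preference. Given lists $L^{k-1}$ (with $f\in L^{k-1}_w$ iff $w\in L^{k-1}_f$), for a worker $w$ and a firm $f\in L^{k-1}_w$ say the pair $(w,f)$ is mutually unattractive at round $k$ if either (i) there is $f'\in L^{k-1}_w$ with $f'\succ_w f$ such that $w$ is the $\succ_{f'}$-most preferred element of $L^{k-1}_{f'}$, or (ii) there is $w'\in L^{k-1}_f$ with $w'\succ_f w$ such that $f$ is the $\succ_{w'}$-most preferred element of $L^{k-1}_{w'}$. Define $L^k_w$ (resp. $L^k_f$) by removing from $L^{k-1}_w$ every $f$ (resp. from $L^{k-1}_f$ every $w$) such that $(w,f)$ is mutually unattractive at round $k$. The normal form $P^*$ is the collection of lists $L^{k^*}$ where $k^*$ is the least $k$ with $L^{k+1}=L^k$; its lists are denoted $L^*_w$, $L^*_f$, each ordered by the original preferences. *)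

theory Defs
  imports Main
begin

text \<open>A preference relation r on a set A is given as r x y meaning "x is strictly preferred to y".
  It must be a strict complete (total) order on A.\<close>
definition strict_order_on :: "'a set \<Rightarrow> ('a \<Rightarrow> 'a \<Rightarrow> bool) \<Rightarrow> bool" where
  "strict_order_on A r \<longleftrightarrow>
     (\<forall>x\<in>A. \<not> r x x) \<and>
     (\<forall>x\<in>A. \<forall>y\<in>A. \<forall>z\<in>A. r x y \<longrightarrow> r y z \<longrightarrow> r x z) \<and>
     (\<forall>x\<in>A. \<forall>y\<in>A. x \<noteq> y \<longrightarrow> r x y \<or> r y x)"

text \<open>A matching: bijection mu from workers W onto firms F.  Firm f's partner is the worker w'
  with mu w' = f.\<close>
definition is_matching :: "'w set \<Rightarrow> 'f set \<Rightarrow> ('w \<Rightarrow> 'f) \<Rightarrow> bool" where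
  "is_matching W F mu \<longleftrightarrow> bij_betw mu W F"

definition blocking_pair ::
  "'w set \<Rightarrow> 'f set \<Rightarrow> ('w \<Rightarrow> 'f \<Rightarrow> 'f \<Rightarrow> bool) \<Rightarrow> ('f \<Rightarrow> 'w \<Rightarrow> 'w \<Rightarrow> bool)
   \<Rightarrow> ('w \<Rightarrow> 'f) \<Rightarrow> 'w \<Rightarrow> 'f \<Rightarrow> bool" where
  "blocking_pair W F pw pf mu w f \<longleftrightarrow>
     w \<in> W \<and> f \<in> F \<and> pw w f (mu w) \<and>
     (\<exists>w'\<in>W. mu w' = f \<and> pf f w w')"

definition stable_matching ::
  "'w set \<Rightarrow> 'f set \<Rightarrow> ('w \<Rightarrow> 'f \<Rightarrow> 'f \<Rightarrow> bool) \<Rightarrow> ('f \<Rightarrow> 'w \<Rightarrow> 'w \<Rightarrow> bool)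
   \<Rightarrow> ('w \<Rightarrow> 'f) \<Rightarrow> bool" where
  "stable_matching W F pw pf mu \<longleftrightarrow>
     is_matching W F mu \<and> (\<forall>w\<in>W. \<forall>f\<in>F. \<not> blocking_pair W F pw pf mu w f)"

text \<open>Unique stable matching: one exists and any two agree on W (matchings are only
  meaningful on W).\<close>
definition unique_stable_matching ::
  "'w set \<Rightarrow> 'f set \<Rightarrow> ('w \<Rightarrow> 'f \<Rightarrow> 'f \<Rightarrow> bool) \<Rightarrow> ('f \<Rightarrow> 'w \<Rightarrow> 'w \<Rightarrow> bool) \<Rightarrow> bool" where
  "unique_stable_matching W F pw pf \<longleftrightarrow>
     (\<exists>mu. stable_matching W F pw pf mu \<and>
        (\<forall>mu'. stable_matching W F pw pf mu' \<longrightarrow> (\<forall>w\<in>W. mu' w = mu w)))"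

text \<open>The lists L^k are represented jointly by the set of pairs (w,f) with f \<in> L^k_w
  (equivalently w \<in> L^k_f; the symmetry invariant is built in).\<close>
definition mutually_unattractive ::
  "('w \<Rightarrow> 'f \<Rightarrow> 'f \<Rightarrow> bool) \<Rightarrow> ('f \<Rightarrow> 'w \<Rightarrow> 'w \<Rightarrow> bool) \<Rightarrow> ('w \<times> 'f) set \<Rightarrow> 'w \<Rightarrow> 'f \<Rightarrow> bool" where
  "mutually_unattractive pw pf L w f \<longleftrightarrow>
     (\<exists>f'. (w, f') \<in> L \<and> pw w f' f \<and>
            (\<forall>w''. (w'', f') \<in> L \<and> w'' \<noteq> w \<longrightarrow> pf f' w w'')) \<or>
     (\<exists>w'. (w', f) \<in> L \<and> pf f w' w \<and>
            (\<forall>f''. (w', f'') \<in> L \<and> f'' \<noteq> f \<longrightarrow> pw w' f f''))"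

fun idua_lists ::
  "'w set \<Rightarrow> 'f set \<Rightarrow> ('w \<Rightarrow> 'f \<Rightarrow> 'f \<Rightarrow> bool) \<Rightarrow> ('f \<Rightarrow> 'w \<Rightarrow> 'w \<Rightarrow> bool) \<Rightarrow> nat \<Rightarrow> ('w \<times> 'f) set" where
  "idua_lists W F pw pf 0 = W \<times> F"
| "idua_lists W F pw pf (Suc k) =
     {(w, f) \<in> idua_lists W F pw pf k.
        \<not> mutually_unattractive pw pf (idua_lists W F pw pf k) w f}"

definition normal_form ::
  "'w set \<Rightarrow> 'f set \<Rightarrow> ('w \<Rightarrow> 'f \<Rightarrow> 'f \<Rightarrow> bool) \<Rightarrow> ('f \<Rightarrow> 'w \<Rightarrow> 'w \<Rightarrow> bool) \<Rightarrow> ('w \<times> 'f) set" where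
  "normal_form W F pw pf =
     idua_lists W F pw pf
       (LEAST k. idua_lists W F pw pf (Suc k) = idua_lists W F pw pf k)"

definition nf_acyclic ::
  "'w set \<Rightarrow> 'f set \<Rightarrow> ('w \<Rightarrow> 'f \<Rightarrow> 'f \<Rightarrow> bool) \<Rightarrow> ('f \<Rightarrow> 'w \<Rightarrow> 'w \<Rightarrow> bool) \<Rightarrow> bool" where
  "nf_acyclic W F pw pf \<longleftrightarrow>
     (let L = normal_form W F pw pf in
      \<not> (\<exists>k::nat. \<exists>ws :: nat \<Rightarrow> 'w. \<exists>fs :: nat \<Rightarrow> 'f.
           2 \<le> k \<and> k \<le> card W \<and>
           inj_on ws {0..<k} \<and> inj_on fs {0..<k} \<and>
           ws ` {0..<k} \<subseteq> W \<and> fs ` {0..<k} \<subseteq> F \<and>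
           (\<forall>j<k.
              (ws j, fs j) \<in> L \<and> (ws j, fs ((j + 1) mod k)) \<in> L \<and>
              pw (ws j) (fs ((j + 1) mod k)) (fs j) \<and>
              (ws ((j + k - 1) mod k), fs j) \<in> L \<and>
              pf (fs j) (ws j) (ws ((j + k - 1) mod k)))))"

end

(* Pairs deleted by IDUA stay mutually unattractive in all later rounds, and pairs of a stable
   matching are never deleted, so the normal form is a fixpoint of the deletion step that contains
   every stable matching.  With as many workers as firms, every list of the normal form is nonempty,
   and matching each worker with the top firm T w of his list is a stable matching; dually, matching
   each firm with the top worker T' f of its list is one as well.  A firm that ranks w first in the
   normal form is ranked last by w.  Hence if T' (T w) = w for all workers, all lists of the normal
   form are singletons, and then the stable matching is unique.  Otherwise iterating w to T' (T w)
   from a worker where it moves runs around a nontrivial cycle of this permutation of the workers,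
   and the workers on it together with their top firms form a cycle of the normal form. *)

theory Submission
  imports Defs "HOL-Combinatorics.Orbits"
begin

definition is_best :: "('a \<Rightarrow> 'a \<Rightarrow> bool) \<Rightarrow> 'a set \<Rightarrow> 'a \<Rightarrow> bool" where
  "is_best r A x \<longleftrightarrow> x \<in> A \<and> (\<forall>y\<in>A. y \<noteq> x \<longrightarrow> r x y)"

lemma strict_order_on_irrefl: "strict_order_on A r \<Longrightarrow> x \<in> A \<Longrightarrow> \<not> r x x"
  unfolding strict_order_on_def by blast

lemma strict_order_on_trans:
  "strict_order_on A r \<Longrightarrow> x \<in> A \<Longrightarrow> y \<in> A \<Longrightarrow> z \<in> A \<Longrightarrow> r x y \<Longrightarrow> r y z \<Longrightarrow> r x z"
  unfolding strict_order_on_def by blast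

lemma strict_order_on_total:
  "strict_order_on A r \<Longrightarrow> x \<in> A \<Longrightarrow> y \<in> A \<Longrightarrow> x \<noteq> y \<Longrightarrow> r x y \<or> r y x"
  unfolding strict_order_on_def by blast

lemma strict_order_on_asym: "strict_order_on A r \<Longrightarrow> x \<in> A \<Longrightarrow> y \<in> A \<Longrightarrow> r x y \<Longrightarrow> \<not> r y x"
  unfolding strict_order_on_def by blast

lemma strict_order_on_best_exists:
  assumes order: "strict_order_on X r" and "finite A" "A \<noteq> {}" "A \<subseteq> X"
  shows "\<exists>x. is_best r A x"
  using assms(2-4)
proof (induction A rule: finite_ne_induct)
  case (singleton x)
  then show ?case by (auto simp: is_best_def)
next
  case (insert a A)
  then obtain x where x: "is_best r A x" by blast
  then have "x \<in> X" "a \<in> X" "a \<noteq> x" using insert by (auto simp: is_best_def)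
  then consider "r a x" | "r x a" using strict_order_on_total[OF order] by blast
  then show ?case
  proof cases
    case 1
    have "r a y" if "y \<in> A" "y \<noteq> a" for y
    proof (cases "y = x")
      case False
      then have "r x y" using x that unfolding is_best_def by blast
      then show ?thesis
        using strict_order_on_trans[OF order \<open>a \<in> X\<close> \<open>x \<in> X\<close>] 1 that insert.prems by blast
    qed (use 1 in simp)
    then have "is_best r (insert a A) a" unfolding is_best_def by blast
    then show ?thesis ..
  next
    case 2
    then have "is_best r (insert a A) x" using x unfolding is_best_def by blast
    then show ?thesis ..
  qed
qed

lemma strict_order_on_best_unique:
  assumes "strict_order_on X r" "A \<subseteq> X" "is_best r A x" "is_best r A y"
  shows "x = y"
  using assms strict_order_on_asym[OF assms(1)] unfolding is_best_def by (metis subsetD)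

section \<open>Iterated deletion of unattractive alternatives\<close>

lemma mutually_unattractive_iff:
  "mutually_unattractive pw pf L w f \<longleftrightarrow>
     (\<exists>f'. pw w f' f \<and> is_best (pf f') {v. (v, f') \<in> L} w) \<or>
     (\<exists>w'. pf f w' w \<and> is_best (pw w') {g. (w', g) \<in> L} f)"
  unfolding mutually_unattractive_def is_best_def by auto

lemma mutually_unattractive_converse:
  "mutually_unattractive pf pw (L\<inverse>) f w \<longleftrightarrow> mutually_unattractive pw pf L w f"
  unfolding mutually_unattractive_def by (simp add: disj_commute)

definition idua_step ::
  "('w \<Rightarrow> 'f \<Rightarrow> 'f \<Rightarrow> bool) \<Rightarrow> ('f \<Rightarrow> 'w \<Rightarrow> 'w \<Rightarrow> bool) \<Rightarrow> ('w \<times> 'f) set \<Rightarrow> ('w \<times> 'f) set" where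
  "idua_step pw pf L = {(w, f) \<in> L. \<not> mutually_unattractive pw pf L w f}"

lemma idua_lists_Suc: "idua_lists W F pw pf (Suc k) = idua_step pw pf (idua_lists W F pw pf k)"
  by (simp add: idua_step_def)

lemma idua_step_converse: "idua_step pf pw (L\<inverse>) = (idua_step pw pf L)\<inverse>"
  unfolding idua_step_def by (auto simp: mutually_unattractive_converse)

lemma idua_lists_converse: "idua_lists F W pf pw k = (idua_lists W F pw pf k)\<inverse>"
  by (induction k) (simp_all only: idua_lists.simps(1) converse_Times idua_lists_Suc idua_step_converse)

lemma normal_form_converse: "normal_form F W pf pw = (normal_form W F pw pf)\<inverse>"
  unfolding normal_form_def idua_lists_converse[of F W pf pw] converse_inject ..

lemma idua_lists_subset: "idua_lists W F pw pf k \<subseteq> W \<times> F"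
  by (induction k) auto

lemma normal_form_subset: "normal_form W F pw pf \<subseteq> W \<times> F"
  unfolding normal_form_def by (rule idua_lists_subset)

lemma idua_lists_stabilize:
  assumes "finite W" "finite F"
  shows "\<exists>k. idua_lists W F pw pf (Suc k) = idua_lists W F pw pf k"
proof (rule ccontr)
  assume no_fixpoint: "\<nexists>k. idua_lists W F pw pf (Suc k) = idua_lists W F pw pf k"
  have "idua_lists W F pw pf (Suc k) \<subseteq> idua_lists W F pw pf k" for k
    by auto
  then have shrink: "idua_lists W F pw pf (Suc k) \<subset> idua_lists W F pw pf k" for k
    using no_fixpoint by blast
  have finite: "finite (idua_lists W F pw pf k)" for k
    using finite_subset[OF idua_lists_subset finite_cartesian_product[OF assms]] .
  have "card (idua_lists W F pw pf k) + k \<le> card (W \<times> F)" for k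
  proof (induction k)
    case (Suc k)
    then show ?case using psubset_card_mono[OF finite shrink, of k] by simp
  qed simp
  from this[of "Suc (card (W \<times> F))"] show False by simp
qed

lemma idua_step_normal_form:
  assumes "finite W" "finite F"
  shows "idua_step pw pf (normal_form W F pw pf) = normal_form W F pw pf"
  using LeastI_ex[OF idua_lists_stabilize[OF assms]]
  unfolding normal_form_def idua_lists_Suc .

locale preference_profile =
  fixes W :: "'w set" and F :: "'f set"
    and pw :: "'w \<Rightarrow> 'f \<Rightarrow> 'f \<Rightarrow> bool" and pf :: "'f \<Rightarrow> 'w \<Rightarrow> 'w \<Rightarrow> bool"
  assumes finite_workers: "finite W" and finite_firms: "finite F"
    and worker_order: "w \<in> W \<Longrightarrow> strict_order_on F (pw w)"
    and firm_order: "f \<in> F \<Longrightarrow> strict_order_on W (pf f)"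
begin

abbreviation NF :: "('w \<times> 'f) set" where
  "NF \<equiv> normal_form W F pw pf"

lemmas NF_subset = normal_form_subset[of W F pw pf]

end

sublocale preference_profile \<subseteq> swapped: preference_profile F W pf pw
  by unfold_locales (auto simp: finite_workers finite_firms worker_order firm_order)

context preference_profile
begin

text \<open>The witness is w's favourite among the firms that rank w first; it is never deleted.\<close>

lemma better_top_survives_step:
  assumes L: "L \<subseteq> W \<times> F" and f: "f \<in> F"
    and better: "pw w f' f" and top: "is_best (pf f') {v. (v, f') \<in> L} w"
  shows "\<exists>g. pw w g f \<and> is_best (pf g) {v. (v, g) \<in> idua_step pw pf L} w"
proof -
  define C where "C = {g. is_best (pf g) {v. (v, g) \<in> L} w}"
  have C: "C \<subseteq> F" using L unfolding C_def is_best_def by auto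
  have "f' \<in> C" using top unfolding C_def by simp
  have w: "w \<in> W" and f': "f' \<in> F" using L top unfolding is_best_def by auto
  note order = worker_order[OF w]
  obtain g where g: "is_best (pw w) C g"
    using strict_order_on_best_exists[OF order finite_subset[OF C finite_firms] _ C] \<open>f' \<in> C\<close>
    by blast
  then have "g \<in> C" unfolding is_best_def by simp
  then have g_F: "g \<in> F" and top_g: "is_best (pf g) {v. (v, g) \<in> L} w"
    using C unfolding C_def by auto
  have "pw w g f"
  proof (cases "g = f'")
    case False
    then have "pw w g f'" using g \<open>f' \<in> C\<close> unfolding is_best_def by auto
    then show ?thesis using strict_order_on_trans[OF order g_F f' f] better by blast
  qed (use better in simp)
  moreover have "\<not> mutually_unattractive pw pf L w g"
    unfolding mutually_unattractive_iff
  proof (rule notI, elim disjE exE conjE)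
    fix f'' assume worse: "pw w f'' g" and "is_best (pf f'') {v. (v, f'') \<in> L} w"
    then have "f'' \<in> C" unfolding C_def by simp
    moreover have "f'' \<noteq> g" using worse strict_order_on_irrefl[OF order g_F] by blast
    ultimately have "pw w g f''" using g unfolding is_best_def by blast
    then show False using worse strict_order_on_asym[OF order g_F] C \<open>f'' \<in> C\<close> by blast
  next
    fix w' assume worse: "pf g w' w" and "is_best (pw w') {g'. (w', g') \<in> L} g"
    then have "(w', g) \<in> L" unfolding is_best_def by simp
    then have w': "w' \<in> W" using L by blast
    note order_g = firm_order[OF g_F]
    have "w' \<noteq> w" using worse strict_order_on_irrefl[OF order_g w] by blast
    then have "pf g w w'" using top_g \<open>(w', g) \<in> L\<close> unfolding is_best_def by blast
    then show False using worse strict_order_on_asym[OF order_g w w'] by blast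
  qed
  then have "is_best (pf g) {v. (v, g) \<in> idua_step pw pf L} w"
    using top_g unfolding idua_step_def is_best_def by auto
  ultimately show ?thesis by blast
qed

end

context preference_profile
begin

lemma mutually_unattractive_idua_step:
  assumes L: "L \<subseteq> W \<times> F" and w: "w \<in> W" and f: "f \<in> F"
    and "mutually_unattractive pw pf L w f"
  shows "mutually_unattractive pw pf (idua_step pw pf L) w f"
proof -
  from assms(4) consider
      (worker) f' where "pw w f' f" "is_best (pf f') {v. (v, f') \<in> L} w"
    | (firm) w' where "pf f w' w" "is_best (pw w') {g. (w', g) \<in> L} f"
    unfolding mutually_unattractive_iff by blast
  then show ?thesis
  proof cases
    case worker
    then show ?thesis
      using better_top_survives_step[OF L f] unfolding mutually_unattractive_iff by blast
  next
    case firm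
    have "L\<inverse> \<subseteq> F \<times> W" using L by auto
    from swapped.better_top_survives_step[OF this w, of f w'] firm
    show ?thesis unfolding mutually_unattractive_iff idua_step_converse by auto
  qed
qed

lemma notin_idua_lists_unattractive:
  "w \<in> W \<Longrightarrow> f \<in> F \<Longrightarrow> (w, f) \<notin> idua_lists W F pw pf k \<Longrightarrow>
     mutually_unattractive pw pf (idua_lists W F pw pf k) w f"
proof (induction k)
  case (Suc k)
  then have "mutually_unattractive pw pf (idua_lists W F pw pf k) w f"
    by (cases "(w, f) \<in> idua_lists W F pw pf k") (auto simp: idua_step_def)
  then have "mutually_unattractive pw pf (idua_step pw pf (idua_lists W F pw pf k)) w f"
    by (rule mutually_unattractive_idua_step[OF idua_lists_subset Suc.prems(1,2)])
  then show ?case by (simp only: idua_lists_Suc)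
qed simp

lemma notin_normal_form_unattractive:
  "w \<in> W \<Longrightarrow> f \<in> F \<Longrightarrow> (w, f) \<notin> NF \<Longrightarrow> mutually_unattractive pw pf NF w f"
  unfolding normal_form_def by (rule notin_idua_lists_unattractive)

lemma in_normal_form_not_unattractive: "(w, f) \<in> NF \<Longrightarrow> \<not> mutually_unattractive pw pf NF w f"
  using idua_step_normal_form[OF finite_workers finite_firms] unfolding idua_step_def by blast

end

section \<open>Stable matchings and the normal form\<close>

lemma stable_matching_converse:
  assumes "stable_matching F W pf pw mu"
  shows "stable_matching W F pw pf (inv_into F mu)"
proof -
  have bij: "bij_betw mu F W"
    using assms unfolding stable_matching_def is_matching_def by blast
  have "\<not> blocking_pair W F pw pf (inv_into F mu) w f" if "w \<in> W" "f \<in> F" for w f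
  proof
    assume "blocking_pair W F pw pf (inv_into F mu) w f"
    then have "blocking_pair F W pf pw mu f w"
      using that bij bij_betw_inv_into_right bij_betw_inv_into_left
        bij_betw_apply[OF bij_betw_inv_into[OF bij]]
      unfolding blocking_pair_def by metis
    with assms that show False unfolding stable_matching_def by blast
  qed
  then show ?thesis
    unfolding stable_matching_def is_matching_def using bij_betw_inv_into[OF bij] by blast
qed

context preference_profile
begin

lemma stable_matching_not_unattractive:
  assumes stable: "stable_matching W F pw pf mu" and L: "L \<subseteq> W \<times> F"
    and graph: "\<And>v. v \<in> W \<Longrightarrow> (v, mu v) \<in> L" and w: "w \<in> W"
  shows "\<not> mutually_unattractive pw pf L w (mu w)"
proof -
  have bij: "bij_betw mu W F"
    using stable unfolding stable_matching_def is_matching_def by blast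
  have no_block: "\<not> blocking_pair W F pw pf mu v g" if "v \<in> W" "g \<in> F" for v g
    using stable that unfolding stable_matching_def by blast
  have mu_w: "mu w \<in> F" using bij_betw_apply[OF bij w] .
  show ?thesis
    unfolding mutually_unattractive_iff
  proof (rule notI, elim disjE exE conjE)
    fix f' assume better: "pw w f' (mu w)" and top: "is_best (pf f') {v. (v, f') \<in> L} w"
    have f': "f' \<in> F" using top L unfolding is_best_def by auto
    then obtain w' where w': "w' \<in> W" "mu w' = f'"
      using bij unfolding bij_betw_def by blast
    have "w' \<noteq> w" using better w' strict_order_on_irrefl[OF worker_order[OF w] f'] by auto
    then have "pf f' w w'" using top graph[OF w'(1)] w' unfolding is_best_def by auto
    then have "blocking_pair W F pw pf mu w f'"
      using w w' f' better unfolding blocking_pair_def by blast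
    then show False using no_block w f' by blast
  next
    fix w' assume better: "pf (mu w) w' w" and top: "is_best (pw w') {g. (w', g) \<in> L} (mu w)"
    have w': "w' \<in> W" using top L unfolding is_best_def by auto
    have "w' \<noteq> w" using better strict_order_on_irrefl[OF firm_order[OF mu_w] w] by auto
    then have "mu w' \<noteq> mu w" using bij w w' unfolding bij_betw_def inj_on_def by blast
    then have "pw w' (mu w) (mu w')" using top graph[OF w'] unfolding is_best_def by auto
    then have "blocking_pair W F pw pf mu w' (mu w)"
      using w w' mu_w better unfolding blocking_pair_def by blast
    then show False using no_block w' mu_w by blast
  qed
qed

lemma stable_matching_in_normal_form:
  assumes stable: "stable_matching W F pw pf mu" and w: "w \<in> W"
  shows "(w, mu w) \<in> NF"
proof -
  have "(v, mu v) \<in> idua_lists W F pw pf k" if "v \<in> W" for v k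
    using that
  proof (induction k arbitrary: v)
    case 0
    then show ?case
      using stable bij_betw_apply unfolding stable_matching_def is_matching_def by fastforce
  next
    case (Suc k)
    then show ?case
      using stable_matching_not_unattractive[OF stable idua_lists_subset Suc.IH Suc.prems]
      unfolding idua_lists_Suc idua_step_def by blast
  qed
  then show ?thesis unfolding normal_form_def using w .
qed

lemma best_of_firm_ranks_it_last:
  assumes top: "is_best (pf f) {v. (v, f) \<in> NF} w" and g: "(w, g) \<in> NF" "g \<noteq> f"
  shows "pw w g f"
proof -
  have w: "w \<in> W" and f: "f \<in> F" using top NF_subset unfolding is_best_def by auto
  have "\<not> pw w f g"
  proof
    assume "pw w f g"
    then have "mutually_unattractive pw pf NF w g"
      using top unfolding mutually_unattractive_iff by blast
    then show False using in_normal_form_not_unattractive g(1) by blast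
  qed
  moreover have "g \<in> F" using g(1) NF_subset by auto
  ultimately show ?thesis using strict_order_on_total[OF worker_order[OF w] _ f g(2)] by blast
qed

definition singleton_lists :: bool where
  "singleton_lists \<longleftrightarrow>
     (\<forall>w\<in>W. card {f. (w, f) \<in> NF} = 1) \<and> (\<forall>f\<in>F. card {w. (w, f) \<in> NF} = 1)"

lemma singleton_lists_imp_nf_acyclic:
  assumes "singleton_lists"
  shows "nf_acyclic W F pw pf"
  unfolding nf_acyclic_def Let_def
proof (intro notI, elim exE conjE)
  fix k and ws :: "nat \<Rightarrow> 'w" and fs :: "nat \<Rightarrow> 'f"
  assume "2 \<le> k" "ws ` {0..<k} \<subseteq> W" and cycle: "\<forall>j<k.
    (ws j, fs j) \<in> NF \<and> (ws j, fs ((j + 1) mod k)) \<in> NF \<and> pw (ws j) (fs ((j + 1) mod k)) (fs j) \<and>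
    (ws ((j + k - 1) mod k), fs j) \<in> NF \<and> pf (fs j) (ws j) (ws ((j + k - 1) mod k))"
  then have w: "ws 0 \<in> W" by auto
  have "1 mod k = 1" using \<open>2 \<le> k\<close> by simp
  then have in_list: "(ws 0, fs 0) \<in> NF" "(ws 0, fs 1) \<in> NF" and prefers: "pw (ws 0) (fs 1) (fs 0)"
    using cycle[rule_format, of 0] \<open>2 \<le> k\<close> by simp_all
  obtain f where "{g. (ws 0, g) \<in> NF} = {f}"
    using assms w unfolding singleton_lists_def by (metis card_1_singletonE)
  with in_list have "fs 1 = fs 0" by (metis mem_Collect_eq singletonD)
  moreover have "fs 0 \<in> F" using in_list NF_subset by auto
  ultimately show False using prefers strict_order_on_irrefl[OF worker_order[OF w]] by simp
qed

end

section \<open>The worker-optimal and firm-optimal matchings\<close>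

locale marriage_market = preference_profile W F pw pf
  for W :: "'w set" and F :: "'f set" and pw pf +
  assumes equal_size: "card W = card F"

sublocale marriage_market \<subseteq> swapped: marriage_market F W pf pw
  by unfold_locales (simp add: equal_size)

context marriage_market
begin

text \<open>Otherwise every firm would be the top choice of a distinct worker other than w.\<close>

lemma normal_form_worker_list_nonempty:
  assumes w: "w \<in> W"
  shows "{f. (w, f) \<in> NF} \<noteq> {}"
proof
  assume empty: "{f. (w, f) \<in> NF} = {}"
  have "\<exists>v. is_best (pw v) {g. (v, g) \<in> NF} f" if f: "f \<in> F" for f
  proof -
    have "mutually_unattractive pw pf NF w f"
      using notin_normal_form_unattractive[OF w f] empty by blast
    then show ?thesis using empty unfolding mutually_unattractive_iff is_best_def by blast
  qed
  then obtain h where h: "\<And>f. f \<in> F \<Longrightarrow> is_best (pw (h f)) {g. (h f, g) \<in> NF} f"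
    by metis
  then have h_NF: "(h f, f) \<in> NF" if "f \<in> F" for f
    using that unfolding is_best_def by blast
  have "inj_on h F"
  proof (rule inj_onI)
    fix f g assume f: "f \<in> F" and g: "g \<in> F" and same: "h f = h g"
    have "h g \<in> W" using h_NF[OF g] NF_subset by auto
    moreover have "{f. (h g, f) \<in> NF} \<subseteq> F" using NF_subset by auto
    moreover have "is_best (pw (h g)) {f. (h g, f) \<in> NF} f" using h[OF f] same by simp
    ultimately show "f = g" using strict_order_on_best_unique[OF worker_order _ _ h[OF g]] by blast
  qed
  moreover have "h ` F \<subseteq> W - {w}" using h_NF NF_subset empty by auto
  ultimately have "card F \<le> card (W - {w})"
    using card_inj_on_le finite_workers by blast
  then show False using card_Diff1_less[OF finite_workers w] equal_size by simp
qed

definition top_choice :: "'w \<Rightarrow> 'f" where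
  "top_choice w = (THE f. is_best (pw w) {f. (w, f) \<in> NF} f)"

lemma top_choice_is_best:
  assumes w: "w \<in> W"
  shows "is_best (pw w) {f. (w, f) \<in> NF} (top_choice w)"
proof -
  have sub: "{f. (w, f) \<in> NF} \<subseteq> F" using NF_subset by auto
  note order = worker_order[OF w]
  obtain f where f: "is_best (pw w) {f. (w, f) \<in> NF} f"
    using strict_order_on_best_exists[OF order finite_subset[OF sub finite_firms]
        normal_form_worker_list_nonempty[OF w] sub] by blast
  have "top_choice w = f"
    unfolding top_choice_def
    by (rule the_equality[where P = "is_best (pw w) {f. (w, f) \<in> NF}", OF f])
      (rule strict_order_on_best_unique[OF order sub _ f])
  with f show ?thesis by simp
qed

lemma top_choice_in_normal_form: "w \<in> W \<Longrightarrow> (w, top_choice w) \<in> NF"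
  using top_choice_is_best unfolding is_best_def by blast

lemma top_choice_preferred:
  "w \<in> W \<Longrightarrow> (w, f) \<in> NF \<Longrightarrow> f \<noteq> top_choice w \<Longrightarrow> pw w (top_choice w) f"
  using top_choice_is_best unfolding is_best_def by blast

lemma top_choice_inj: "inj_on top_choice W"
proof (rule inj_onI, rule ccontr)
  have no_rival: "\<not> pf (top_choice w) v w"
    if "v \<in> W" "w \<in> W" "top_choice v = top_choice w" for v w
  proof
    assume "pf (top_choice w) v w"
    then have "mutually_unattractive pw pf NF w (top_choice w)"
      using top_choice_is_best[OF that(1)] that(3) unfolding mutually_unattractive_iff by auto
    then show False
      using in_normal_form_not_unattractive top_choice_in_normal_form[OF that(2)] by blast
  qed
  fix v w assume v: "v \<in> W" and w: "w \<in> W" and same: "top_choice v = top_choice w" and "v \<noteq> w"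
  have "top_choice w \<in> F" using top_choice_in_normal_form[OF w] NF_subset by auto
  then show False
    using strict_order_on_total[OF firm_order[OF \<open>top_choice w \<in> F\<close>] v w \<open>v \<noteq> w\<close>]
      no_rival[OF v w same] no_rival[OF w v same[symmetric]] same by auto
qed

lemma top_choice_bij: "bij_betw top_choice W F"
proof -
  have "top_choice ` W \<subseteq> F" using top_choice_in_normal_form NF_subset by auto
  moreover have "card (top_choice ` W) = card F"
    using card_image[OF top_choice_inj] equal_size by simp
  ultimately have "top_choice ` W = F" using card_subset_eq[OF finite_firms] by blast
  then show ?thesis using top_choice_inj unfolding bij_betw_def by blast
qed

lemma top_choice_stable: "stable_matching W F pw pf top_choice"
  unfolding stable_matching_def is_matching_def
proof (intro conjI top_choice_bij ballI notI)
  fix w f assume w: "w \<in> W" and f: "f \<in> F" and "blocking_pair W F pw pf top_choice w f"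
  then obtain w' where better: "pw w f (top_choice w)"
    and w': "w' \<in> W" "top_choice w' = f" and rival: "pf f w w'"
    unfolding blocking_pair_def by blast
  note order = worker_order[OF w]
  have top: "top_choice w \<in> F" using bij_betw_apply[OF top_choice_bij w] .
  have not_worse: "\<not> pw w (top_choice w) f" using better strict_order_on_asym[OF order f top] by blast
  have "(w, f) \<notin> NF"
    using top_choice_preferred[OF w] not_worse better strict_order_on_irrefl[OF order f] by blast
  then consider (worker) f' where "pw w f' f" "is_best (pf f') {v. (v, f') \<in> NF} w"
    | (firm) v where "pf f v w" "is_best (pw v) {g. (v, g) \<in> NF} f"
    using notin_normal_form_unattractive[OF w f] unfolding mutually_unattractive_iff by blast
  then show False
  proof cases
    case worker
    then have "(w, f') \<in> NF" unfolding is_best_def by blast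
    then have "f' \<in> F" using NF_subset by auto
    have "pw w (top_choice w) f"
    proof (cases "f' = top_choice w")
      case False
      then have "pw w (top_choice w) f'" using top_choice_preferred[OF w \<open>(w, f') \<in> NF\<close>] by blast
      then show ?thesis using strict_order_on_trans[OF order top \<open>f' \<in> F\<close> f] worker(1) by blast
    qed (use worker in simp)
    with not_worse show False ..
  next
    case firm
    then have v: "v \<in> W" using NF_subset unfolding is_best_def by auto
    have "{g. (v, g) \<in> NF} \<subseteq> F" using NF_subset by auto
    then have "top_choice v = f"
      using strict_order_on_best_unique[OF worker_order[OF v]] top_choice_is_best[OF v] firm(2) by blast
    then have "v = w'" using top_choice_inj v w' unfolding inj_on_def by blast
    then show False using firm(1) rival strict_order_on_asym[OF firm_order[OF f] w w'(1)] by blast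
  qed
qed

end

lemma permutes_nontrivial_cycle:
  assumes "s permutes A" "finite A" "x \<in> A" "s x \<noteq> x"
  obtains k where "2 \<le> k" "k \<le> card A" "inj_on (\<lambda>j. (s ^^ j) x) {0..<k}"
    "\<And>j. (s ^^ (j mod k)) x = (s ^^ j) x"
proof
  have orbit: "x \<in> orbit s x"
    using permutation_self_in_orbit[OF permutes_imp_permutation[OF assms(2,1)]] .
  define k where "k = funpow_dist1 s x x"
  have return: "(s ^^ k) x = x"
    unfolding k_def by (rule funpow_dist1_prop[OF orbit])
  show inj: "inj_on (\<lambda>j. (s ^^ j) x) {0..<k}"
    unfolding k_def by (rule inj_on_funpow_dist1[OF orbit])
  have "(\<lambda>j. (s ^^ j) x) ` {0..<k} \<subseteq> A"
    using permutes_in_funpow_image[OF assms(1,3)] by blast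
  from card_inj_on_le[OF inj this assms(2)] show "k \<le> card A" by simp
  show "2 \<le> k"
    using return assms(4) unfolding k_def by (cases "funpow_dist s (s x) x") auto
  then show "(s ^^ (j mod k)) x = (s ^^ j) x" for j
    using funpow_mod_eq[OF return] by simp
qed

context marriage_market
begin

lemma firm_top_choice_is_best:
  "f \<in> F \<Longrightarrow> is_best (pf f) {w. (w, f) \<in> NF} (swapped.top_choice f)"
  using swapped.top_choice_is_best by (simp add: normal_form_converse[of F W pf pw])

lemma firm_top_choice_in_normal_form: "f \<in> F \<Longrightarrow> (swapped.top_choice f, f) \<in> NF"
  using firm_top_choice_is_best unfolding is_best_def by blast

lemma firm_top_choice_preferred:
  "f \<in> F \<Longrightarrow> (w, f) \<in> NF \<Longrightarrow> w \<noteq> swapped.top_choice f \<Longrightarrow> pf f (swapped.top_choice f) w"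
  using firm_top_choice_is_best unfolding is_best_def by blast

definition optimal_matchings_coincide :: bool where
  "optimal_matchings_coincide \<longleftrightarrow> (\<forall>w\<in>W. swapped.top_choice (top_choice w) = w)"

lemma worker_list_singleton:
  assumes w: "w \<in> W" and mutual: "swapped.top_choice (top_choice w) = w"
  shows "{f. (w, f) \<in> NF} = {top_choice w}"
proof (intro equalityI subsetI)
  fix f assume "f \<in> {f. (w, f) \<in> NF}"
  then have f: "(w, f) \<in> NF" "f \<in> F" using NF_subset by auto
  have top: "top_choice w \<in> F" using bij_betw_apply[OF top_choice_bij w] .
  have "is_best (pf (top_choice w)) {v. (v, top_choice w) \<in> NF} w"
    using firm_top_choice_is_best[OF top] mutual by simp
  then have "f \<noteq> top_choice w \<Longrightarrow> pw w f (top_choice w)"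
    using best_of_firm_ranks_it_last f(1) by blast
  then show "f \<in> {top_choice w}"
    using top_choice_preferred[OF w f(1)] strict_order_on_asym[OF worker_order[OF w] f(2) top]
    by blast
qed (use top_choice_in_normal_form[OF w] in blast)

lemma unique_imp_optimal_matchings_coincide:
  assumes "unique_stable_matching W F pw pf"
  shows "optimal_matchings_coincide"
proof -
  have firm_optimal: "stable_matching W F pw pf (inv_into F swapped.top_choice)"
    using stable_matching_converse[OF swapped.top_choice_stable] .
  from assms obtain mu where "\<forall>mu'. stable_matching W F pw pf mu' \<longrightarrow> (\<forall>w\<in>W. mu' w = mu w)"
    unfolding unique_stable_matching_def by blast
  then have "top_choice w = inv_into F swapped.top_choice w" if "w \<in> W" for w
    using top_choice_stable firm_optimal that by metis
  moreover have "swapped.top_choice (inv_into F swapped.top_choice w) = w" if "w \<in> W" for w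
    using bij_betw_inv_into_right[OF swapped.top_choice_bij that] .
  ultimately show ?thesis unfolding optimal_matchings_coincide_def by simp
qed

lemma singleton_lists_imp_unique:
  assumes "singleton_lists"
  shows "unique_stable_matching W F pw pf"
  unfolding unique_stable_matching_def
proof (intro exI conjI allI impI ballI)
  show "stable_matching W F pw pf top_choice" by (rule top_choice_stable)
  fix mu w assume "stable_matching W F pw pf mu" "w \<in> W"
  then have "mu w \<in> {f. (w, f) \<in> NF}" "top_choice w \<in> {f. (w, f) \<in> NF}"
    using stable_matching_in_normal_form top_choice_in_normal_form by auto
  moreover obtain f where "{f. (w, f) \<in> NF} = {f}"
    using assms \<open>w \<in> W\<close> unfolding singleton_lists_def by (metis card_1_singletonE)
  ultimately show "mu w = top_choice w" by simp
qed

lemma mismatch_orbit: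
  assumes w0: "w0 \<in> W" and mismatch: "swapped.top_choice (top_choice w0) \<noteq> w0"
  obtains k and ws :: "nat \<Rightarrow> 'w" where "2 \<le> k" "k \<le> card W" "inj_on ws {0..<k}"
    "\<And>j. ws j \<in> W" "\<And>j. ws (j mod k) = ws j"
    "\<And>j. ws (Suc j) = swapped.top_choice (top_choice (ws j))" "\<And>j. ws (Suc j) \<noteq> ws j"
proof -
  define s where "s w = (if w \<in> W then swapped.top_choice (top_choice w) else w)" for w
  have "bij_betw (swapped.top_choice \<circ> top_choice) W W"
    using bij_betw_trans[OF top_choice_bij swapped.top_choice_bij] .
  then have "bij_betw s W W" by (rule bij_betw_cong[THEN iffD1, rotated]) (simp add: s_def)
  then have perm: "s permutes W" by (rule bij_imp_permutes) (simp add: s_def)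
  obtain k where k: "2 \<le> k" "k \<le> card W" and inj: "inj_on (\<lambda>j. (s ^^ j) w0) {0..<k}"
    and periodic: "\<And>j. (s ^^ (j mod k)) w0 = (s ^^ j) w0"
    using permutes_nontrivial_cycle[OF perm finite_workers w0] mismatch w0 unfolding s_def by auto
  define ws where "ws j = (s ^^ j) w0" for j
  have ws_W: "ws j \<in> W" for j unfolding ws_def by (rule permutes_in_funpow_image[OF perm w0])
  have step: "ws (Suc j) = swapped.top_choice (top_choice (ws j))" for j
    using ws_W unfolding ws_def s_def by simp
  have "ws (Suc j) \<noteq> ws j" for j
  proof -
    have "Suc j mod k \<noteq> j mod k" using k(1) by (simp add: mod_Suc)
    moreover have "Suc j mod k < k" "j mod k < k" using k(1) by auto
    ultimately have "ws (Suc j mod k) \<noteq> ws (j mod k)"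
      using inj unfolding inj_on_def ws_def by auto
    then show ?thesis using periodic unfolding ws_def by simp
  qed
  with that k inj ws_W periodic step show thesis unfolding ws_def by blast
qed

lemma top_choice_cycle_edge:
  assumes p: "p \<in> W" and w: "swapped.top_choice (top_choice p) = w"
    and "p \<noteq> w" and mismatch: "swapped.top_choice (top_choice w) \<noteq> w"
  shows "(w, top_choice p) \<in> NF \<and> (w, top_choice w) \<in> NF \<and> pw w (top_choice w) (top_choice p) \<and>
    (p, top_choice p) \<in> NF \<and> pf (top_choice p) w p"
proof -
  have f: "top_choice p \<in> F" using bij_betw_apply[OF top_choice_bij p] .
  then have "w \<in> W" using bij_betw_apply[OF swapped.top_choice_bij] w by blast
  have edge: "(w, top_choice p) \<in> NF" using firm_top_choice_in_normal_form[OF f] w by simp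
  have "top_choice p \<noteq> top_choice w" using w mismatch by metis
  then have "pw w (top_choice w) (top_choice p)"
    using top_choice_preferred[OF \<open>w \<in> W\<close> edge] by simp
  moreover have "pf (top_choice p) w p"
    using firm_top_choice_preferred[OF f top_choice_in_normal_form[OF p]] w \<open>p \<noteq> w\<close> by simp
  ultimately show ?thesis using edge top_choice_in_normal_form p \<open>w \<in> W\<close> by simp
qed

lemma mismatch_imp_not_nf_acyclic:
  assumes "w0 \<in> W" "swapped.top_choice (top_choice w0) \<noteq> w0"
  shows "\<not> nf_acyclic W F pw pf"
proof -
  obtain k and ws :: "nat \<Rightarrow> 'w" where k: "2 \<le> k" "k \<le> card W" and inj_ws: "inj_on ws {0..<k}"
    and ws_W: "\<And>j. ws j \<in> W" and periodic: "\<And>j. ws (j mod k) = ws j"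
    and step: "\<And>j. ws (Suc j) = swapped.top_choice (top_choice (ws j))"
    and moves: "\<And>j. ws (Suc j) \<noteq> ws j"
    using mismatch_orbit[OF assms] by blast
  define fs where "fs j = inv_into F swapped.top_choice (ws j)" for j
  have fs_F: "fs j \<in> F" and ws_fs: "swapped.top_choice (fs j) = ws j" for j
    unfolding fs_def using bij_betw_inv_into_right bij_betw_apply[OF bij_betw_inv_into]
      swapped.top_choice_bij ws_W by metis+
  have fs_Suc: "fs (Suc j) = top_choice (ws j)" for j
    unfolding fs_def step
    using inv_into_f_f[OF bij_betw_imp_inj_on[OF swapped.top_choice_bij]]
      bij_betw_apply[OF top_choice_bij ws_W] by blast
  have inj_fs: "inj_on fs {0..<k}"
    using inj_ws ws_fs unfolding inj_on_def by metis
  have pred: "ws (Suc (j + k - 1)) = ws j" for j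
    using periodic[of "j + k"] periodic[of j] k(1) by simp
  have fs_pred: "fs j = top_choice (ws (j + k - 1))" for j
    using fs_Suc[of "j + k - 1"] pred unfolding fs_def by simp
  have edge: "(ws j, fs j) \<in> NF \<and> (ws j, fs (Suc j)) \<in> NF \<and> pw (ws j) (fs (Suc j)) (fs j) \<and>
      (ws (j + k - 1), fs j) \<in> NF \<and> pf (fs j) (ws j) (ws (j + k - 1))" for j
  proof -
    have "swapped.top_choice (top_choice (ws (j + k - 1))) = ws j" using step pred by metis
    moreover have "ws (j + k - 1) \<noteq> ws j" using moves pred by metis
    moreover have "swapped.top_choice (top_choice (ws j)) \<noteq> ws j" using step moves by metis
    ultimately show ?thesis
      unfolding fs_pred[of j] fs_Suc[of j] by (rule top_choice_cycle_edge[OF ws_W])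
  qed
  have mod_k: "ws ((j + k - 1) mod k) = ws (j + k - 1)" "fs ((j + 1) mod k) = fs (Suc j)" for j
    using periodic unfolding fs_def by simp_all
  show ?thesis
    unfolding nf_acyclic_def Let_def not_not
    by (intro exI[of _ k] exI[of _ ws] exI[of _ fs])
      (use k inj_ws inj_fs ws_W fs_F edge in \<open>auto simp only: mod_k\<close>)
qed

end

context marriage_market
begin

lemma firm_list_singleton:
  assumes "f \<in> F" "top_choice (swapped.top_choice f) = f"
  shows "{w. (w, f) \<in> NF} = {swapped.top_choice f}"
  using swapped.worker_list_singleton[OF assms] by (simp add: normal_form_converse[of F W pf pw])

lemma optimal_matchings_coincide_imp_singleton_lists:
  assumes "optimal_matchings_coincide"
  shows "singleton_lists"
proof -
  have "top_choice (swapped.top_choice f) = f" if "f \<in> F" for f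
  proof -
    obtain w where "w \<in> W" "f = top_choice w"
      using top_choice_bij \<open>f \<in> F\<close> unfolding bij_betw_def by blast
    then show ?thesis using assms unfolding optimal_matchings_coincide_def by simp
  qed
  then show ?thesis
    using assms worker_list_singleton firm_list_singleton
    unfolding singleton_lists_def optimal_matchings_coincide_def by simp
qed

lemma nf_acyclic_imp_optimal_matchings_coincide:
  "nf_acyclic W F pw pf \<Longrightarrow> optimal_matchings_coincide"
  using mismatch_imp_not_nf_acyclic unfolding optimal_matchings_coincide_def by blast

end

theorem theorem1:
  fixes W :: "'w set" and F :: "'f set" and n :: nat
    and pw :: "'w \<Rightarrow> 'f \<Rightarrow> 'f \<Rightarrow> bool" and pf :: "'f \<Rightarrow> 'w \<Rightarrow> 'w \<Rightarrow> bool"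
  assumes "finite W" and "finite F"
    and "card W = n" and "card F = n" and "n \<ge> 2"
    and "\<forall>w\<in>W. strict_order_on F (pw w)"
    and "\<forall>f\<in>F. strict_order_on W (pf f)"
  shows "(unique_stable_matching W F pw pf \<longleftrightarrow> nf_acyclic W F pw pf) \<and>
         (nf_acyclic W F pw pf \<longleftrightarrow>
            ((\<forall>w\<in>W. card {f. (w, f) \<in> normal_form W F pw pf} = 1) \<and>
             (\<forall>f\<in>F. card {w. (w, f) \<in> normal_form W F pw pf} = 1)))"
proof -
  interpret marriage_market W F pw pf
    using assms by unfold_locales auto
  have "unique_stable_matching W F pw pf \<longleftrightarrow> singleton_lists"
    using unique_imp_optimal_matchings_coincide optimal_matchings_coincide_imp_singleton_lists
      singleton_lists_imp_unique by blast
  moreover have "nf_acyclic W F pw pf \<longleftrightarrow> singleton_lists"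
    using nf_acyclic_imp_optimal_matchings_coincide optimal_matchings_coincide_imp_singleton_lists
      singleton_lists_imp_nf_acyclic by blast
  ultimately show ?thesis unfolding singleton_lists_def by blast
qed

end
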